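(* Let $\mathbf a=\{a_j\}_{j\ge1}$ and $\mathbf b=\{b_j\}_{j\ge1}$ be positive sequences satisfying $0<a_1\le a_2\le\cdots$ and $\inf_j b_j>0$, and fix $\omega\in(0,1)$. Then for all $\varepsilon\in(0,1)$ and $d\in\mathbb N$, $$n(\varepsilon,\mathrm{APP}_d)=n\Big(\Big(\frac{\ln\varepsilon^{-2}}{\ln\omega^{-1}}+1\Big)^{-1/2},I_d\Big)\quad\text{and}\quad n(\varepsilon,I_d)=n\big(\omega^{(\varepsilon^{-2}-1)/2},\mathrm{APP}_d\big).$$
   Context: For $f\in L_2([0,1]^d)$, $\hat f(\mathbf k)=\int_{[0,1]^d}f(\mathbf x)e^{-2\pi i\mathbf k\cdot\mathbf x}d\mathbf x$. $W_2^{\mathbf a,\mathbf b}([0,1]^d)$ is the Hilbert space of $f\in L_2([0,1]^d)$ with norm $\|f\|^2=\sum_{\mathbf k\in\mathbb Z^d}(1+\sum_{j=1}^d a_j|k_j|^{2b_j})|\hat f(\mathbf k)|^2<\infty$, and $I_d:W_2^{\mathbf a,\mathbf b}([0,1]^d)\to L_2([0,1]^d)$ is the identity embedding. With $\omega_{\mathbf k}=\omega^{\sum_{j=1}^d a_j|k_j|^{2b_j}}$, the analytic Korobov space $H(K_{d,\mathbf a,2\mathbf b})$ is the reproducing kernel Hilbert space with kernel $K(\mathbf x,\mathbf y)=\sum_{\mathbf k\in\mathbb Z^d}\omega_{\mathbf k}e^{2\pi i\mathbf k\cdot(\mathbf x-\mathbf y)}$, i.e. functions with norm $\|f\|^2=\sum_{\mathbf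 k}|\hat f(\mathbf k)|^2\omega_{\mathbf k}^{-1}<\infty$; $\mathrm{APP}_d:H(K_{d,\mathbf a,2\mathbf b})\to L_2([0,1]^d)$, $\mathrm{APP}_d f=f$. Approximation numbers: $a_n(T)=\inf\{\|T-A\|:\mathrm{rank}\,A<n\}$. For $S_d\in\{I_d,\mathrm{APP}_d\}$ the information complexity (minimal number of continuous linear functionals needed for worst-case error $\le\varepsilon$ on the unit ball) is $n(\varepsilon,S_d)=\min\{n\ge0: a_{n+1}(S_d)\le\varepsilon\}$. *)

theory Defs
  imports "HOL-Analysis.Analysis"
begin

text \<open>Functions in L_2([0,1]^d) are represented by their Fourier coefficient
  families (Parseval: L_2([0,1]^d) is isometric to l_2(Z^d)).\<close>

type_synonym idx = "nat \<Rightarrow> int"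
type_synonym coef = "idx \<Rightarrow> complex"

definition Zd :: "nat \<Rightarrow> idx set" where
  "Zd d = {k. \<forall>j. (j = 0 \<or> d < j) \<longrightarrow> k j = 0}"

definition wl2 :: "(idx \<Rightarrow> real) \<Rightarrow> nat \<Rightarrow> coef set" where
  "wl2 w d = {f. (\<forall>k. k \<notin> Zd d \<longrightarrow> f k = 0) \<and>
                 (\<lambda>k. w k * (cmod (f k))\<^sup>2) summable_on Zd d}"

definition wnorm :: "(idx \<Rightarrow> real) \<Rightarrow> nat \<Rightarrow> coef \<Rightarrow> real" where
  "wnorm w d f = sqrt (\<Sum>\<^sub>\<infinity>k\<in>Zd d. w k * (cmod (f k))\<^sup>2)"

definition L2norm :: "nat \<Rightarrow> coef \<Rightarrow> real" where
  "L2norm d f = wnorm (\<lambda>_. 1) d f"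

definition fin_rank_op :: "(idx \<Rightarrow> real) \<Rightarrow> nat \<Rightarrow> nat \<Rightarrow> (coef \<Rightarrow> coef) \<Rightarrow> bool" where
  "fin_rank_op w d n A \<longleftrightarrow>
     (\<forall>f\<in>wl2 w d. A f \<in> wl2 (\<lambda>_. 1) d) \<and>
     (\<forall>f\<in>wl2 w d. \<forall>g\<in>wl2 w d. A (\<lambda>k. f k + g k) = (\<lambda>k. A f k + A g k)) \<and>
     (\<forall>c. \<forall>f\<in>wl2 w d. A (\<lambda>k. c * f k) = (\<lambda>k. c * A f k)) \<and>
     (\<exists>C. \<forall>f\<in>wl2 w d. L2norm d (A f) \<le> C * wnorm w d f) \<and>
     1 \<le> n \<and>
     (\<exists>g :: nat \<Rightarrow> coef. \<forall>f\<in>wl2 w d. \<exists>c :: nat \<Rightarrow> complex.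
          A f = (\<lambda>k. \<Sum>i<n - 1. c i * g i k))"

definition approx_num :: "(idx \<Rightarrow> real) \<Rightarrow> nat \<Rightarrow> nat \<Rightarrow> real" where
  "approx_num w d n =
     Inf ((\<lambda>A. Sup ((\<lambda>f. L2norm d (\<lambda>k. f k - A f k)) ` {f \<in> wl2 w d. wnorm w d f \<le> 1}))
          ` {A. fin_rank_op w d n A})"

definition info_compl :: "(idx \<Rightarrow> real) \<Rightarrow> nat \<Rightarrow> real \<Rightarrow> nat" where
  "info_compl w d \<epsilon> = (LEAST n. approx_num w d (n + 1) \<le> \<epsilon>)"

definition sob_weight :: "(nat \<Rightarrow> real) \<Rightarrow> (nat \<Rightarrow> real) \<Rightarrow> nat \<Rightarrow> idx \<Rightarrow> real" where
  "sob_weight a b d k = 1 + (\<Sum>j=1..d. a j * \<bar>real_of_int (k j)\<bar> powr (2 * b j))"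

definition omega_k :: "(nat \<Rightarrow> real) \<Rightarrow> (nat \<Rightarrow> real) \<Rightarrow> real \<Rightarrow> nat \<Rightarrow> idx \<Rightarrow> real" where
  "omega_k a b \<omega> d k = \<omega> powr (\<Sum>j=1..d. a j * \<bar>real_of_int (k j)\<bar> powr (2 * b j))"

definition kor_weight :: "(nat \<Rightarrow> real) \<Rightarrow> (nat \<Rightarrow> real) \<Rightarrow> real \<Rightarrow> nat \<Rightarrow> idx \<Rightarrow> real" where
  "kor_weight a b \<omega> d k = inverse (omega_k a b \<omega> d k)"

definition n_I :: "(nat \<Rightarrow> real) \<Rightarrow> (nat \<Rightarrow> real) \<Rightarrow> nat \<Rightarrow> real \<Rightarrow> nat" where
  "n_I a b d \<epsilon> = info_compl (sob_weight a b d) d \<epsilon>"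

definition n_APP :: "(nat \<Rightarrow> real) \<Rightarrow> (nat \<Rightarrow> real) \<Rightarrow> real \<Rightarrow> nat \<Rightarrow> real \<Rightarrow> nat" where
  "n_APP a b \<omega> d \<epsilon> = info_compl (kor_weight a b \<omega> d) d \<epsilon>"

end

theory Submission
  imports Defs "HOL-Library.Function_Algebras"
begin

text \<open>Both embeddings are diagonal in the Fourier basis: if the squared norm carries the weight
  w(k) \<ge> 1, the singular values are w(k)^(-1/2).  Hence a_(n+1) \<le> \<epsilon> exactly when n is at least
  the number of frequencies with \<epsilon>^2 < 1/w(k): projecting onto those coefficients has error at
  most \<epsilon>, and any operator of rank at most n annihilates a nonzero combination of n + 1 of these
  coordinate vectors, on which the identity has norm greater than \<epsilon>.  With
  s(k) = \<Sum>_j a_j |k_j|^(2 b_j), the weights are 1 + s(k) for W_2 and \<omega>^(-s(k)) for the Korobov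
  space, so the counted sets are the sublevel sets s(k) < \<epsilon>^(-2) - 1 and s(k) < 2 ln \<epsilon> / ln \<omega>,
  finite because a and b are positive.  The two identities are the substitutions for \<epsilon> that
  turn one threshold into the other.\<close>

lemma (in vector_space_pair) linear_kernel_nontrivial_on_span:
  assumes f: "Vector_Spaces.linear s1 s2 f" and B: "vs1.independent B" and G: "finite G"
    and card: "card G < card B" and img: "f ` B \<subseteq> vs2.span G"
  shows "\<exists>x\<in>vs1.span B. x \<noteq> 0 \<and> f x = 0"
proof (rule ccontr)
  assume "\<not> ?thesis"
  then have inj: "inj_on f (vs1.span B)"
    using linear_inj_on_iff_eq_0[OF f vs1.subspace_span] by blast
  then have "vs2.independent (f ` B)"
    using linear_independent_injective_image[OF f B] by blast
  then have "card (f ` B) \<le> card G"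
    using vs2.independent_span_bound[OF G _ img] by blast
  moreover have "card (f ` B) = card B"
    using inj_on_subset[OF inj vs1.span_superset] by (rule card_image)
  ultimately show False
    using card by simp
qed

text \<open>HOL has no class of complex vector spaces, so the scalar multiplication of coefficient
  families is passed to the vector-space locale explicitly.\<close>

definition cscale :: "complex \<Rightarrow> ('a \<Rightarrow> complex) \<Rightarrow> 'a \<Rightarrow> complex" where
  "cscale c f = (\<lambda>k. c * f k)"

interpretation cfun: vector_space "cscale :: complex \<Rightarrow> ('a \<Rightarrow> complex) \<Rightarrow> _"
  by unfold_locales (auto simp: cscale_def fun_eq_iff algebra_simps)

interpretation cfun_pair: vector_space_pair "cscale :: complex \<Rightarrow> ('a \<Rightarrow> complex) \<Rightarrow> _" cscale ..

lemma sum_fun_apply: "(\<Sum>i\<in>F. f i) x = (\<Sum>i\<in>F. f i x)"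
  by (induction F rule: infinite_finite_induct) auto

lemma cfun_independent_units: "cfun.independent ((\<lambda>k. 0(k := 1)) ` S)"
  unfolding cfun.independent_explicit_finite_subsets
proof (intro allI impI ballI)
  fix T u v
  assume T: "T \<subseteq> (\<lambda>k. 0(k := 1)) ` S" "finite T" and sum0: "(\<Sum>v\<in>T. cscale (u v) v) = 0"
    and v: "v \<in> T"
  obtain k where k: "v = 0(k := 1)" using T v by blast
  have unit: "v' k = (if v' = v then 1 else 0)" if "v' \<in> T" for v'
    using that T k by auto
  have "0 = (\<Sum>v\<in>T. cscale (u v) v) k"
    by (simp add: sum0)
  also have "\<dots> = (\<Sum>v'\<in>T. if v' = v then u v' else 0)"
    unfolding sum_fun_apply cscale_def
    by (intro sum.cong refl) (simp add: unit)
  also have "\<dots> = u v"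
    using T v by simp
  finally show "u v = 0" by simp
qed

lemma cfun_span_units_support:
  assumes "f \<in> cfun.span ((\<lambda>k. 0(k := 1)) ` S)" and "k \<notin> S"
  shows "f k = 0"
proof -
  have "\<forall>k. k \<notin> S \<longrightarrow> f k = 0"
    by (rule cfun.span_induct[OF assms(1)]) (auto simp: cfun.subspace_def cscale_def)
  then show ?thesis
    using assms(2) by blast
qed

lemma wl2_finite_support:
  assumes S: "finite S" "S \<subseteq> Zd d" and f: "\<And>k. k \<notin> S \<Longrightarrow> f k = 0"
  shows "f \<in> wl2 w d" and "wnorm w d f = sqrt (\<Sum>k\<in>S. w k * (cmod (f k))\<^sup>2)"
proof -
  have "((\<lambda>k. w k * (cmod (f k))\<^sup>2) has_sum (\<Sum>k\<in>S. w k * (cmod (f k))\<^sup>2)) (Zd d)"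
    by (rule has_sum_finite_neutralI) (use S f in auto)
  then show "f \<in> wl2 w d" and "wnorm w d f = sqrt (\<Sum>k\<in>S. w k * (cmod (f k))\<^sup>2)"
    using S f by (auto simp: wl2_def wnorm_def infsumI dest: has_sum_imp_summable)
qed

lemma L2norm_sq: "(L2norm d f)\<^sup>2 = (\<Sum>\<^sub>\<infinity>k\<in>Zd d. (cmod (f k))\<^sup>2)"
  unfolding L2norm_def wnorm_def by (simp add: infsum_nonneg)

lemma L2norm_nonneg: "0 \<le> L2norm d f"
  unfolding L2norm_def wnorm_def by (simp add: infsum_nonneg)

lemma wl2_L2_norm_le:
  assumes w: "\<And>k. 1 \<le> w k" and f: "f \<in> wl2 w d"
  shows "f \<in> wl2 (\<lambda>_. 1) d" and "L2norm d f \<le> wnorm w d f"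
proof -
  have sw: "(\<lambda>k. w k * (cmod (f k))\<^sup>2) summable_on Zd d"
    using f by (simp add: wl2_def)
  have le: "(cmod (f k))\<^sup>2 \<le> w k * (cmod (f k))\<^sup>2" for k
    using mult_right_mono[OF w[of k], of "(cmod (f k))\<^sup>2"] by simp
  have s1: "(\<lambda>k. (cmod (f k))\<^sup>2) summable_on Zd d"
    by (rule summable_on_comparison_test[OF sw]) (use le in auto)
  then show "f \<in> wl2 (\<lambda>_. 1) d"
    using f by (simp add: wl2_def)
  show "L2norm d f \<le> wnorm w d f"
    unfolding L2norm_def wnorm_def
    by (simp add: infsum_mono[OF s1 sw le] real_sqrt_le_mono)
qed

lemma L2norm_diff_sq_le:
  assumes f: "f \<in> wl2 (\<lambda>_. 1) d" and g: "g \<in> wl2 (\<lambda>_. 1) d"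
  shows "(L2norm d (\<lambda>k. f k - g k))\<^sup>2 \<le> 2 * (L2norm d f)\<^sup>2 + 2 * (L2norm d g)\<^sup>2"
proof -
  have pointwise: "(cmod (x - y))\<^sup>2 \<le> 2 * (cmod x)\<^sup>2 + 2 * (cmod y)\<^sup>2" for x y
  proof -
    have "(cmod (x - y))\<^sup>2 \<le> (cmod x + cmod y)\<^sup>2"
      by (simp add: power_mono norm_triangle_ineq4)
    also have "\<dots> \<le> 2 * (cmod x)\<^sup>2 + 2 * (cmod y)\<^sup>2"
      using zero_le_power2[of "cmod x - cmod y"] unfolding power2_diff power2_sum by linarith
    finally show ?thesis .
  qed
  have sf: "(\<lambda>k. (cmod (f k))\<^sup>2) summable_on Zd d" and sg: "(\<lambda>k. (cmod (g k))\<^sup>2) summable_on Zd d"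
    using f g by (simp_all add: wl2_def)
  have s2: "(\<lambda>k. 2 * (cmod (f k))\<^sup>2 + 2 * (cmod (g k))\<^sup>2) summable_on Zd d"
    by (intro summable_on_add summable_on_cmult_right sf sg)
  have sd: "(\<lambda>k. (cmod (f k - g k))\<^sup>2) summable_on Zd d"
    by (rule summable_on_comparison_test[OF s2]) (simp_all add: pointwise)
  have "(\<Sum>\<^sub>\<infinity>k\<in>Zd d. (cmod (f k - g k))\<^sup>2) \<le> (\<Sum>\<^sub>\<infinity>k\<in>Zd d. 2 * (cmod (f k))\<^sup>2 + 2 * (cmod (g k))\<^sup>2)"
    by (rule infsum_mono[OF sd s2 pointwise])
  also have "\<dots> = 2 * (\<Sum>\<^sub>\<infinity>k\<in>Zd d. (cmod (f k))\<^sup>2) + 2 * (\<Sum>\<^sub>\<infinity>k\<in>Zd d. (cmod (g k))\<^sup>2)"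
    by (simp add: infsum_add summable_on_cmult_right sf sg infsum_cmult_right)
  finally show ?thesis
    by (simp add: L2norm_sq)
qed

definition worst_err :: "(idx \<Rightarrow> real) \<Rightarrow> nat \<Rightarrow> (coef \<Rightarrow> coef) \<Rightarrow> real" where
  "worst_err w d A = Sup ((\<lambda>f. L2norm d (\<lambda>k. f k - A f k)) ` {f \<in> wl2 w d. wnorm w d f \<le> 1})"

lemma approx_num_worst_err: "approx_num w d n = Inf (worst_err w d ` {A. fin_rank_op w d n A})"
  unfolding approx_num_def worst_err_def ..

lemma err_le_worst_err:
  assumes w: "\<And>k. 1 \<le> w k" and A: "fin_rank_op w d n A"
    and f: "f \<in> wl2 w d" "wnorm w d f \<le> 1"
  shows "L2norm d (\<lambda>k. f k - A f k) \<le> worst_err w d A"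
proof -
  obtain C where C: "\<And>f. f \<in> wl2 w d \<Longrightarrow> L2norm d (A f) \<le> C * wnorm w d f"
    using A unfolding fin_rank_op_def by blast
  have "(L2norm d (\<lambda>k. h k - A h k))\<^sup>2 \<le> 2 + 2 * (max C 0)\<^sup>2"
    if h: "h \<in> wl2 w d" "wnorm w d h \<le> 1" for h
  proof -
    have wn: "0 \<le> wnorm w d h"
      using w unfolding wnorm_def by (simp add: infsum_nonneg order.trans[OF zero_le_one])
    have "L2norm d (A h) \<le> C * wnorm w d h"
      by (rule C[OF h(1)])
    also have "\<dots> \<le> max C 0 * wnorm w d h"
      using wn by (intro mult_right_mono) auto
    also have "\<dots> \<le> max C 0"
      using wn h(2) by (intro mult_left_le) auto
    finally have "(L2norm d (A h))\<^sup>2 \<le> (max C 0)\<^sup>2"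
      by (simp add: power_mono L2norm_nonneg)
    moreover have "(L2norm d h)\<^sup>2 \<le> 1"
      using wl2_L2_norm_le(2)[OF w h(1)] h(2) by (intro power_le_one L2norm_nonneg) simp
    moreover have "A h \<in> wl2 (\<lambda>_. 1) d"
      using A h unfolding fin_rank_op_def by blast
    ultimately show ?thesis
      using L2norm_diff_sq_le[OF wl2_L2_norm_le(1)[OF w h(1)]] by fastforce
  qed
  then have bdd: "bdd_above ((\<lambda>f. L2norm d (\<lambda>k. f k - A f k)) ` {f \<in> wl2 w d. wnorm w d f \<le> 1})"
    by (intro bdd_aboveI[of _ "sqrt (2 + 2 * (max C 0)\<^sup>2)"])
      (auto intro!: real_le_rsqrt)
  show ?thesis
    unfolding worst_err_def by (rule cSup_upper[OF _ bdd]) (use f in auto)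
qed

lemma worst_err_nonneg:
  assumes "\<And>k. 1 \<le> w k" and "fin_rank_op w d n A"
  shows "0 \<le> worst_err w d A"
proof -
  have "(\<lambda>k. 0) \<in> wl2 w d" and "wnorm w d (\<lambda>k. 0) \<le> 1"
    by (simp_all add: wl2_def wnorm_def)
  then show ?thesis
    using err_le_worst_err[OF assms] L2norm_nonneg order.trans by blast
qed

definition coord_proj :: "idx set \<Rightarrow> coef \<Rightarrow> coef" where
  "coord_proj S f = (\<lambda>k. if k \<in> S then f k else 0)"

lemma fin_rank_op_coord_proj:
  assumes w: "\<And>k. 1 \<le> w k" and S: "finite S" "S \<subseteq> Zd d"
  shows "fin_rank_op w d (card S + 1) (coord_proj S)"
proof -
  obtain h where h: "bij_betw h {..<card S} S"
    using ex_bij_betw_nat_finite[OF S(1)] lessThan_atLeast0 by metis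
  have span: "\<exists>c. coord_proj S f = (\<lambda>k. \<Sum>i<card S + 1 - 1. c i * (0(h i := 1)) k)" for f
  proof (intro exI[of _ "\<lambda>i. f (h i)"] ext)
    fix k
    have "(\<Sum>i<card S. f (h i) * (0(h i := 1)) k) = (\<Sum>s\<in>S. f s * (0(s := 1)) k)"
      by (rule sum.reindex_bij_betw[OF h])
    also have "\<dots> = coord_proj S f k"
      using S(1) by (simp add: coord_proj_def if_distrib cong: if_cong)
    finally show "coord_proj S f k = (\<Sum>i<card S + 1 - 1. f (h i) * (0(h i := 1)) k)"
      by simp
  qed
  have bounded: "coord_proj S f \<in> wl2 (\<lambda>_. 1) d \<and> L2norm d (coord_proj S f) \<le> 1 * wnorm w d f"
    if f: "f \<in> wl2 w d" for f
  proof
    show P: "coord_proj S f \<in> wl2 (\<lambda>_. 1) d"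
      by (rule wl2_finite_support[OF S]) (simp add: coord_proj_def)
    have "L2norm d (coord_proj S f) \<le> L2norm d f"
      unfolding L2norm_def wnorm_def
      using P wl2_L2_norm_le(1)[OF w f]
      by (intro real_sqrt_le_mono infsum_mono) (auto simp: wl2_def coord_proj_def)
    then show "L2norm d (coord_proj S f) \<le> 1 * wnorm w d f"
      using wl2_L2_norm_le(2)[OF w f] by simp
  qed
  show ?thesis
    unfolding fin_rank_op_def
  proof (intro conjI ballI allI)
    show "\<exists>C. \<forall>f\<in>wl2 w d. L2norm d (coord_proj S f) \<le> C * wnorm w d f"
      using bounded by blast
    show "\<exists>g. \<forall>f\<in>wl2 w d. \<exists>c. coord_proj S f = (\<lambda>k. \<Sum>i<card S + 1 - 1. c i * g i k)"
      using span by (intro exI[of _ "\<lambda>i. 0(h i := 1)"]) blast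
  qed (use bounded in \<open>auto simp: coord_proj_def fun_eq_iff\<close>)
qed

lemma worst_err_coord_proj_le:
  assumes w: "\<And>k. 1 \<le> w k" and \<epsilon>: "0 \<le> \<epsilon>"
    and tail: "\<And>k. k \<in> Zd d \<Longrightarrow> k \<notin> S \<Longrightarrow> inverse (w k) \<le> \<epsilon>\<^sup>2"
  shows "worst_err w d (coord_proj S) \<le> \<epsilon>"
  unfolding worst_err_def
proof (rule cSup_least)
  show "(\<lambda>f. L2norm d (\<lambda>k. f k - coord_proj S f k)) ` {f \<in> wl2 w d. wnorm w d f \<le> 1} \<noteq> {}"
    by (auto simp: wl2_def wnorm_def intro!: exI[of _ "\<lambda>k. 0"])
next
  fix e assume "e \<in> (\<lambda>f. L2norm d (\<lambda>k. f k - coord_proj S f k)) ` {f \<in> wl2 w d. wnorm w d f \<le> 1}"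
  then obtain f where f: "f \<in> wl2 w d" "wnorm w d f \<le> 1" and e: "e = L2norm d (\<lambda>k. f k - coord_proj S f k)"
    by blast
  have w0: "0 \<le> w k" for k
    using w[of k] by linarith
  have sw: "(\<lambda>k. \<epsilon>\<^sup>2 * (w k * (cmod (f k))\<^sup>2)) summable_on Zd d"
    using f by (intro summable_on_cmult_right) (simp add: wl2_def)
  have pointwise: "(cmod (f k - coord_proj S f k))\<^sup>2 \<le> \<epsilon>\<^sup>2 * (w k * (cmod (f k))\<^sup>2)"
    if k: "k \<in> Zd d" for k
  proof (cases "k \<in> S")
    case False
    have "(cmod (f k))\<^sup>2 = inverse (w k) * (w k * (cmod (f k))\<^sup>2)"
      using w[of k] by simp
    also have "\<dots> \<le> \<epsilon>\<^sup>2 * (w k * (cmod (f k))\<^sup>2)"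
      using tail[OF k False] w[of k] by (intro mult_right_mono) auto
    finally show ?thesis
      using False by (simp add: coord_proj_def)
  qed (simp add: coord_proj_def w0)
  have "(\<Sum>\<^sub>\<infinity>k\<in>Zd d. (cmod (f k - coord_proj S f k))\<^sup>2) \<le> (\<Sum>\<^sub>\<infinity>k\<in>Zd d. \<epsilon>\<^sup>2 * (w k * (cmod (f k))\<^sup>2))"
    by (intro infsum_mono summable_on_comparison_test[OF sw]) (simp_all add: pointwise w0)
  also have "\<dots> \<le> \<epsilon>\<^sup>2"
    using f(2) by (simp add: infsum_cmult_right' wnorm_def mult_left_le)
  finally show "e \<le> \<epsilon>"
    unfolding e L2norm_def wnorm_def using \<epsilon> by (simp add: real_le_lsqrt)
qed

text \<open>A is additive and homogeneous only on wl2, which contains every finitely supported family.\<close>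

lemma linear_fin_rank_op_coord_proj:
  assumes A: "fin_rank_op w d m A" and S: "finite S" "S \<subseteq> Zd d"
  shows "Vector_Spaces.linear cscale cscale (A \<circ> coord_proj S)"
  unfolding Vector_Spaces.linear_iff
proof (intro conjI allI)
  have proj_wl2: "coord_proj S f \<in> wl2 w d" for f
    by (rule wl2_finite_support[OF S]) (simp add: coord_proj_def)
  fix x y :: coef and c :: complex
  have "coord_proj S (x + y) = (\<lambda>k. coord_proj S x k + coord_proj S y k)"
    by (auto simp: coord_proj_def)
  then show "(A \<circ> coord_proj S) (x + y) = (A \<circ> coord_proj S) x + (A \<circ> coord_proj S) y"
    using A proj_wl2 unfolding fin_rank_op_def by (simp add: plus_fun_def)
  have "coord_proj S (cscale c x) = (\<lambda>k. c * coord_proj S x k)"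
    by (auto simp: coord_proj_def cscale_def)
  then show "(A \<circ> coord_proj S) (cscale c x) = cscale c ((A \<circ> coord_proj S) x)"
    using A proj_wl2 unfolding fin_rank_op_def by (simp add: cscale_def)
qed (fact cfun.vector_space_axioms)+

lemma fin_rank_op_kernel:
  assumes A: "fin_rank_op w d (n + 1) A" and S: "finite S" "S \<subseteq> Zd d" "n < card S"
  shows "\<exists>f. f \<noteq> 0 \<and> (\<forall>k. k \<notin> S \<longrightarrow> f k = 0) \<and> A f = 0"
proof -
  obtain g where g: "\<And>f. f \<in> wl2 w d \<Longrightarrow> \<exists>c. A f = (\<lambda>k. \<Sum>i<n. c i * g i k)"
    using A unfolding fin_rank_op_def diff_add_inverse2 by blast
  have proj_wl2: "coord_proj S f \<in> wl2 w d" for f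
    by (rule wl2_finite_support[OF S(1,2)]) (simp add: coord_proj_def)
  define B where "B = (\<lambda>k. 0(k := 1 :: complex)) ` S"
  have "card B = card S"
    unfolding B_def by (rule card_image) (auto simp: inj_on_def fun_eq_iff split: if_splits)
  then have card: "card (g ` {..<n}) < card B"
    using S(3) card_image_le[of "{..<n}" g] by simp
  have "(A \<circ> coord_proj S) f \<in> cfun.span (g ` {..<n})" for f
  proof -
    obtain c where "A (coord_proj S f) = (\<lambda>k. \<Sum>i<n. c i * g i k)"
      using g[OF proj_wl2] by blast
    then have "(A \<circ> coord_proj S) f = (\<Sum>i<n. cscale (c i) (g i))"
      by (simp add: fun_eq_iff sum_fun_apply cscale_def)
    also have "\<dots> \<in> cfun.span (g ` {..<n})"
      by (intro cfun.span_sum cfun.span_scale cfun.span_base) auto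
    finally show ?thesis .
  qed
  then have img: "(A \<circ> coord_proj S) ` B \<subseteq> cfun.span (g ` {..<n})"
    by blast
  have indep: "cfun.independent B"
    unfolding B_def by (rule cfun_independent_units)
  obtain f where f: "f \<in> cfun.span B" "f \<noteq> 0" "(A \<circ> coord_proj S) f = 0"
    using cfun_pair.linear_kernel_nontrivial_on_span[OF linear_fin_rank_op_coord_proj[OF A S(1,2)]
        indep _ card img] by blast
  have "coord_proj S f = f"
    using cfun_span_units_support[of f S] f(1) by (auto simp: B_def coord_proj_def)
  then show ?thesis
    using f cfun_span_units_support[of f S] B_def by auto
qed

lemma fin_rank_op_unit_kernel:
  assumes w: "\<And>k. 0 < w k" and A: "fin_rank_op w d (n + 1) A"
    and S: "finite S" "S \<subseteq> Zd d" "n < card S"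
  shows "\<exists>f. (\<forall>k. k \<notin> S \<longrightarrow> f k = 0) \<and> A f = 0 \<and> (\<Sum>k\<in>S. w k * (cmod (f k))\<^sup>2) = 1"
proof -
  obtain f0 where f0: "f0 \<noteq> 0" "\<And>k. k \<notin> S \<Longrightarrow> f0 k = 0" "A f0 = 0"
    using fin_rank_op_kernel[OF A S] by blast
  obtain k0 where k0: "f0 k0 \<noteq> 0"
    using f0(1) by (auto simp: fun_eq_iff)
  define r where "r = (\<Sum>k\<in>S. w k * (cmod (f0 k))\<^sup>2)"
  have r: "0 < r"
    unfolding r_def using S(1) k0 f0(2) w
    by (intro sum_pos2[of S k0]) (auto simp: less_imp_le)
  define c where "c = complex_of_real (inverse (sqrt r))"
  have "f0 \<in> wl2 w d"
    using wl2_finite_support(1)[OF S(1,2)] f0(2) by blast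
  then have "A (\<lambda>k. c * f0 k) = (\<lambda>k. 0)"
    using A f0(3) unfolding fin_rank_op_def by simp
  moreover have "(cmod c)\<^sup>2 = inverse r"
    using r by (simp add: c_def norm_inverse power_inverse)
  then have "(\<Sum>k\<in>S. w k * (cmod (c * f0 k))\<^sup>2) = inverse r * r"
    by (simp add: r_def norm_mult power_mult_distrib sum_distrib_left mult.left_commute)
  ultimately show ?thesis
    using r f0(2) by (intro exI[of _ "\<lambda>k. c * f0 k"]) (simp add: fun_eq_iff)
qed

lemma worst_err_ge_Min:
  assumes w: "\<And>k. 1 \<le> w k" and A: "fin_rank_op w d (n + 1) A"
    and S: "finite S" "S \<subseteq> Zd d" "n < card S"
  shows "sqrt (Min (inverse ` w ` S)) \<le> worst_err w d A"
proof -
  have wpos: "0 < w k" for k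
    using w[of k] by linarith
  obtain f where supp: "\<And>k. k \<notin> S \<Longrightarrow> f k = 0" and Af: "A f = 0"
    and unit: "(\<Sum>k\<in>S. w k * (cmod (f k))\<^sup>2) = 1"
    using fin_rank_op_unit_kernel[OF wpos A S] by blast
  have "Min (inverse ` w ` S) = (\<Sum>k\<in>S. Min (inverse ` w ` S) * (w k * (cmod (f k))\<^sup>2))"
    by (simp add: sum_distrib_left[symmetric] unit)
  also have "\<dots> \<le> (\<Sum>k\<in>S. (cmod (f k))\<^sup>2)"
  proof (rule sum_mono)
    fix k assume k: "k \<in> S"
    have "Min (inverse ` w ` S) \<le> inverse (w k)"
      using S(1) k by simp
    then have "Min (inverse ` w ` S) * (w k * (cmod (f k))\<^sup>2) \<le> inverse (w k) * (w k * (cmod (f k))\<^sup>2)"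
      by (rule mult_right_mono) (simp add: wpos less_imp_le)
    also have "\<dots> = (cmod (f k))\<^sup>2"
      using wpos[of k] by simp
    finally show "Min (inverse ` w ` S) * (w k * (cmod (f k))\<^sup>2) \<le> (cmod (f k))\<^sup>2" .
  qed
  finally have "sqrt (Min (inverse ` w ` S)) \<le> L2norm d f"
    using wl2_finite_support(2)[of S d f "\<lambda>_. 1", OF S(1,2) supp]
    by (simp add: L2norm_def)
  also have "\<dots> = L2norm d (\<lambda>k. f k - A f k)"
    by (simp add: Af)
  also have "\<dots> \<le> worst_err w d A"
    using wl2_finite_support[of S d f w, OF S(1,2) supp] unit
    by (intro err_le_worst_err[OF w A]) auto
  finally show ?thesis .
qed

definition sv_above :: "(idx \<Rightarrow> real) \<Rightarrow> nat \<Rightarrow> real \<Rightarrow> idx set" where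
  "sv_above w d \<epsilon> = {k \<in> Zd d. \<epsilon>\<^sup>2 < inverse (w k)}"

lemma approx_num_le:
  assumes w: "\<And>k. 1 \<le> w k" and fin: "finite (sv_above w d \<epsilon>)" and \<epsilon>: "0 \<le> \<epsilon>"
  shows "approx_num w d (card (sv_above w d \<epsilon>) + 1) \<le> \<epsilon>"
proof -
  let ?S = "sv_above w d \<epsilon>"
  have P: "fin_rank_op w d (card ?S + 1) (coord_proj ?S)"
    using fin by (rule fin_rank_op_coord_proj[OF w]) (auto simp: sv_above_def)
  have "approx_num w d (card ?S + 1) \<le> worst_err w d (coord_proj ?S)"
    unfolding approx_num_worst_err
    using P worst_err_nonneg[OF w] by (intro cInf_lower bdd_belowI[of _ 0]) auto
  also have "\<dots> \<le> \<epsilon>"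
    by (rule worst_err_coord_proj_le[OF w \<epsilon>]) (auto simp: sv_above_def not_less)
  finally show ?thesis .
qed

lemma approx_num_gt:
  assumes w: "\<And>k. 1 \<le> w k" and fin: "finite (sv_above w d \<epsilon>)" and n: "n < card (sv_above w d \<epsilon>)"
  shows "\<epsilon> < approx_num w d (n + 1)"
proof -
  let ?S = "sv_above w d \<epsilon>"
  have "?S \<noteq> {}"
    using n by auto
  then have "\<epsilon>\<^sup>2 < Min (inverse ` w ` ?S)"
    using fin by (auto simp: sv_above_def)
  then have "\<epsilon> < sqrt (Min (inverse ` w ` ?S))"
    by (rule real_less_rsqrt)
  also have "\<dots> \<le> approx_num w d (n + 1)"
    unfolding approx_num_worst_err
  proof (rule cInf_greatest)
    have "fin_rank_op w d (n + 1) (\<lambda>f k. 0)"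
      unfolding fin_rank_op_def
      by (auto simp: wl2_def L2norm_def wnorm_def intro!: exI[of _ 0] exI[of _ "\<lambda>_. 0"])
    then show "worst_err w d ` {A. fin_rank_op w d (n + 1) A} \<noteq> {}"
      by blast
  qed (use fin n in \<open>auto intro: worst_err_ge_Min[OF w] simp: sv_above_def\<close>)
  finally show ?thesis .
qed

lemma info_compl_eq_card:
  assumes w: "\<And>k. 1 \<le> w k" and fin: "finite (sv_above w d \<epsilon>)" and \<epsilon>: "0 \<le> \<epsilon>"
  shows "info_compl w d \<epsilon> = card (sv_above w d \<epsilon>)"
  unfolding info_compl_def
proof (rule Least_equality)
  show "approx_num w d (card (sv_above w d \<epsilon>) + 1) \<le> \<epsilon>"
    by (rule approx_num_le[OF w fin \<epsilon>])
  show "card (sv_above w d \<epsilon>) \<le> n" if "approx_num w d (n + 1) \<le> \<epsilon>" for n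
    using approx_num_gt[OF w fin, of n] that by linarith
qed

definition weighted_freq :: "(nat \<Rightarrow> real) \<Rightarrow> (nat \<Rightarrow> real) \<Rightarrow> nat \<Rightarrow> idx \<Rightarrow> real" where
  "weighted_freq a b d k = (\<Sum>j=1..d. a j * \<bar>real_of_int (k j)\<bar> powr (2 * b j))"

lemma weighted_freq_nonneg:
  assumes "\<forall>j\<ge>1. 0 \<le> a j"
  shows "0 \<le> weighted_freq a b d k"
  unfolding weighted_freq_def using assms by (intro sum_nonneg mult_nonneg_nonneg) auto

lemma finite_weighted_freq_sublevel:
  assumes a: "\<forall>j\<ge>1. 0 < a j" and b: "\<forall>j\<ge>1. 0 < b j"
  shows "finite {k \<in> Zd d. weighted_freq a b d k < L}"
proof -
  define M where "M = \<lceil>\<Sum>j=1..d. (L / a j) powr (1 / (2 * b j))\<rceil>"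
  have "{k \<in> Zd d. weighted_freq a b d k < L} \<subseteq>
      {k. \<forall>j. (j \<in> {1..d} \<longrightarrow> k j \<in> {-M..M}) \<and> (j \<notin> {1..d} \<longrightarrow> k j = 0)}"
  proof safe
    fix k j assume k: "k \<in> Zd d" and small: "weighted_freq a b d k < L"
    show "k j = 0" if "j \<notin> {1..d}"
      using k that unfolding Zd_def by (cases "j = 0") auto
    assume j: "j \<in> {1..d}"
    then have bj: "0 < b j"
      using b by simp
    have "a j * \<bar>real_of_int (k j)\<bar> powr (2 * b j) \<le> weighted_freq a b d k"
      unfolding weighted_freq_def using a j by (intro member_le_sum) auto
    then have lt: "\<bar>real_of_int (k j)\<bar> powr (2 * b j) < L / a j"
      using small a j by (simp add: pos_less_divide_eq mult.commute)
    have "\<bar>real_of_int (k j)\<bar> = (\<bar>real_of_int (k j)\<bar> powr (2 * b j)) powr (1 / (2 * b j))"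
      using bj by (simp add: powr_powr)
    also have "\<dots> < (L / a j) powr (1 / (2 * b j))"
      using bj lt by (intro powr_less_mono2) auto
    also have "\<dots> \<le> (\<Sum>j=1..d. (L / a j) powr (1 / (2 * b j)))"
      using j by (intro member_le_sum) auto
    also have "\<dots> \<le> of_int M"
      unfolding M_def by (rule le_of_int_ceiling)
    finally show "k j \<in> {-M..M}"
      by (simp add: abs_less_iff)
  qed
  moreover have "finite {k. \<forall>j. (j \<in> {1..d} \<longrightarrow> k j \<in> {-M..M}) \<and> (j \<notin> {1..d} \<longrightarrow> k j = 0)}"
    by (rule finite_set_of_finite_funs) auto
  ultimately show ?thesis
    by (rule finite_subset)
qed

lemma sob_weight_eq: "sob_weight a b d k = 1 + weighted_freq a b d k"
  unfolding sob_weight_def weighted_freq_def ..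

lemma kor_weight_eq: "kor_weight a b \<omega> d k = inverse (\<omega> powr weighted_freq a b d k)"
  unfolding kor_weight_def omega_k_def weighted_freq_def ..

lemma sob_weight_ge_1:
  assumes "\<forall>j\<ge>1. 0 \<le> a j"
  shows "1 \<le> sob_weight a b d k"
  using weighted_freq_nonneg[OF assms] by (simp add: sob_weight_eq)

lemma kor_weight_ge_1:
  assumes "\<forall>j\<ge>1. 0 \<le> a j" and "0 < \<omega>" "\<omega> \<le> 1"
  shows "1 \<le> kor_weight a b \<omega> d k"
  using weighted_freq_nonneg[OF assms(1)] assms(2,3)
  by (simp add: kor_weight_eq one_le_inverse powr_le1)

lemma sv_above_sob_weight:
  assumes "\<forall>j\<ge>1. 0 \<le> a j" and "0 < \<delta>"
  shows "sv_above (sob_weight a b d) d \<delta> = {k \<in> Zd d. weighted_freq a b d k < inverse (\<delta>\<^sup>2) - 1}"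
proof -
  have "\<delta>\<^sup>2 < inverse (1 + s) \<longleftrightarrow> s < inverse (\<delta>\<^sup>2) - 1" if "0 \<le> s" for s :: real
    using that assms(2) by (simp add: field_simps)
  then show ?thesis
    using weighted_freq_nonneg[OF assms(1)] by (auto simp: sv_above_def sob_weight_eq)
qed

lemma sv_above_kor_weight:
  assumes "0 < \<omega>" "\<omega> < 1" and "0 < \<delta>"
  shows "sv_above (kor_weight a b \<omega> d) d \<delta> = {k \<in> Zd d. weighted_freq a b d k < 2 * ln \<delta> / ln \<omega>}"
proof -
  have "\<delta>\<^sup>2 < \<omega> powr s \<longleftrightarrow> s < 2 * ln \<delta> / ln \<omega>" for s
  proof -
    have "\<delta>\<^sup>2 < \<omega> powr s \<longleftrightarrow> ln (\<delta>\<^sup>2) < ln (\<omega> powr s)"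
      using assms by (intro ln_less_cancel_iff[symmetric]) auto
    also have "\<dots> \<longleftrightarrow> 2 * ln \<delta> < s * ln \<omega>"
      using assms by (simp add: ln_powr ln_realpow)
    also have "\<dots> \<longleftrightarrow> s < 2 * ln \<delta> / ln \<omega>"
      using assms by (simp add: neg_less_divide_eq)
    finally show ?thesis .
  qed
  then show ?thesis
    by (simp add: sv_above_def kor_weight_eq)
qed

lemma n_I_eq_card:
  assumes a: "\<forall>j\<ge>1. 0 < a j" and b: "\<forall>j\<ge>1. 0 < b j" and \<delta>: "0 < \<delta>"
  shows "n_I a b d \<delta> = card {k \<in> Zd d. weighted_freq a b d k < inverse (\<delta>\<^sup>2) - 1}"
proof -
  have a0: "\<forall>j\<ge>1. 0 \<le> a j"
    using a by (simp add: less_imp_le)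
  show ?thesis
    unfolding n_I_def sv_above_sob_weight[OF a0 \<delta>, symmetric]
    using finite_weighted_freq_sublevel[OF a b] \<delta>
    by (intro info_compl_eq_card sob_weight_ge_1[OF a0]) (simp_all add: sv_above_sob_weight[OF a0 \<delta>])
qed

lemma n_APP_eq_card:
  assumes a: "\<forall>j\<ge>1. 0 < a j" and b: "\<forall>j\<ge>1. 0 < b j" and \<omega>: "0 < \<omega>" "\<omega> < 1" and \<delta>: "0 < \<delta>"
  shows "n_APP a b \<omega> d \<delta> = card {k \<in> Zd d. weighted_freq a b d k < 2 * ln \<delta> / ln \<omega>}"
proof -
  have a0: "\<forall>j\<ge>1. 0 \<le> a j"
    using a by (simp add: less_imp_le)
  show ?thesis
    unfolding n_APP_def sv_above_kor_weight[OF \<omega> \<delta>, symmetric]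
    using finite_weighted_freq_sublevel[OF a b] \<omega> \<delta>
    by (intro info_compl_eq_card kor_weight_ge_1[OF a0]) (simp_all add: sv_above_kor_weight)
qed

theorem theorem2p7:
  fixes a b :: "nat \<Rightarrow> real" and \<omega> \<epsilon> :: real and d :: nat
  assumes "\<forall>j\<ge>1. 0 < a j" and "\<forall>j\<ge>1. a j \<le> a (Suc j)"
    and "\<forall>j\<ge>1. 0 < b j" and "(INF j\<in>{1..}. b j) > 0"
    and "0 < \<omega>" and "\<omega> < 1"
    and "0 < \<epsilon>" and "\<epsilon> < 1"
    and "1 \<le> d"
  shows "n_APP a b \<omega> d \<epsilon> =
           n_I a b d ((ln (\<epsilon> powr (-2)) / ln (inverse \<omega>) + 1) powr (-1/2))
         \<and> n_I a b d \<epsilon> = n_APP a b \<omega> d (\<omega> powr ((\<epsilon> powr (-2) - 1) / 2))"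
proof -
  note a = assms(1) and b = assms(3) and \<omega> = assms(5,6) and \<epsilon> = assms(7,8)
  define L where "L = ln (\<epsilon> powr (-2)) / ln (inverse \<omega>)"
  have L: "L = 2 * ln \<epsilon> / ln \<omega>" and "0 < L"
    using \<omega> \<epsilon> by (simp_all add: L_def ln_inverse divide_neg_neg)
  define \<delta>\<^sub>1 where "\<delta>\<^sub>1 = (L + 1) powr (-1/2)"
  have \<delta>\<^sub>1: "0 < \<delta>\<^sub>1" "inverse (\<delta>\<^sub>1\<^sup>2) - 1 = L"
    using \<open>0 < L\<close> by (simp_all add: \<delta>\<^sub>1_def powr_minus powr_half_sqrt power_inverse)
  define \<delta>\<^sub>2 where "\<delta>\<^sub>2 = \<omega> powr ((\<epsilon> powr (-2) - 1) / 2)"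
  have \<delta>\<^sub>2: "0 < \<delta>\<^sub>2" "2 * ln \<delta>\<^sub>2 / ln \<omega> = inverse (\<epsilon>\<^sup>2) - 1"
    using \<omega> \<epsilon> by (simp_all add: \<delta>\<^sub>2_def powr_minus)
  have "n_APP a b \<omega> d \<epsilon> = n_I a b d \<delta>\<^sub>1"
    using n_APP_eq_card[OF a b \<omega> \<epsilon>(1)] n_I_eq_card[OF a b \<delta>\<^sub>1(1)] \<delta>\<^sub>1(2) L by simp
  moreover have "n_I a b d \<epsilon> = n_APP a b \<omega> d \<delta>\<^sub>2"
    using n_I_eq_card[OF a b \<epsilon>(1)] n_APP_eq_card[OF a b \<omega> \<delta>\<^sub>2(1)] \<delta>\<^sub>2(2) by simp
  ultimately show ?thesis
    unfolding \<delta>\<^sub>1_def \<delta>\<^sub>2_def L_def by blast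
qed

end
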